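(* Let $n\ge1$ and $A$ a nonempty finite set. A graph $g\in\mathscr G_n(A)$ lies in the image of $\mu\colon\mathscr M_n(A)\to\mathscr G_n(A)$ if and only if for every directed path $a_0\to a_1\to\dots\to a_k$ in $g$ with $k\ge1$ there exists an index $0\le i<k$ such that all edges $a_p\to a_q$ with $p\le i<q$ have the same weight.
   Context: $\mathscr M_n(A)$: equivalence classes of planar rooted trees with leaf set $A$ and vertices labelled by $1,\dots,n$, modulo: all stumps equivalent; non-root stumps removable; edges between equally labelled vertices contractible; unary vertices removable. $\mathscr G_n(A)$ is the set of acyclic complete directed graphs on $A$ with weights in $\{1,\dots,n\}$ (each two-element subset carries exactly one directed weighted edge, and the directions form a linear order). $\mu(T)$ is the graph with edge $a\to b$ iff $a$ precedes $b$ in the planar order of the leaves of $T$, weighted by the label of the lowest vertex on the path from $a$ to $b$ in $T$. *)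

theory Defs
  imports Main
begin

text \<open>Planar rooted trees: leaves carry elements of the leaf set, internal vertices
carry a label (a natural number); the order of the children list is the planar structure.
A node with empty child list is a stump; unary nodes are allowed.\<close>
datatype 'a ptree = Leaf 'a | Node nat "'a ptree list"

fun leaves :: "'a ptree \<Rightarrow> 'a list" where
  "leaves (Leaf x) = [x]"
| "leaves (Node k ts) = concat (map leaves ts)"

fun labels :: "'a ptree \<Rightarrow> nat set" where
  "labels (Leaf x) = {}"
| "labels (Node k ts) = insert k (\<Union>t\<in>set ts. labels t)"

fun subtrees :: "'a ptree \<Rightarrow> 'a ptree set" where
  "subtrees (Leaf x) = {Leaf x}"
| "subtrees (Node k ts) = insert (Node k ts) (\<Union>t\<in>set ts. subtrees t)"

text \<open>Representatives of elements of M_n(A): planar rooted trees with leaf set A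
(each element exactly once) and vertex labels in {1..n}.\<close>
definition trees :: "nat \<Rightarrow> 'a set \<Rightarrow> 'a ptree set" where
  "trees n A = {T. distinct (leaves T) \<and> set (leaves T) = A \<and> labels T \<subseteq> {1..n}}"

text \<open>Weighted directed graphs on A as sets of edges (a, b, w): edge a -> b of weight w.\<close>
type_synonym 'a wgraph = "('a \<times> 'a \<times> nat) set"

definition dir :: "'a wgraph \<Rightarrow> ('a \<times> 'a) set" where
  "dir g = {(a, b). \<exists>w. (a, b, w) \<in> g}"

definition Gn :: "nat \<Rightarrow> 'a set \<Rightarrow> 'a wgraph set" where
  "Gn n A = {g. (\<forall>(a, b, w) \<in> g. a \<in> A \<and> b \<in> A \<and> a \<noteq> b \<and> w \<in> {1..n})
      \<and> (\<forall>a\<in>A. \<forall>b\<in>A. a \<noteq> b \<longrightarrow> (\<exists>!e. e \<in> g \<and> (fst e, fst (snd e)) \<in> {(a, b), (b, a)}))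
      \<and> acyclic (dir g)}"

definition precedes :: "'a ptree \<Rightarrow> 'a \<Rightarrow> 'a \<Rightarrow> bool" where
  "precedes T a b = (\<exists>i j. i < j \<and> j < length (leaves T) \<and> leaves T ! i = a \<and> leaves T ! j = b)"

text \<open>The lowest vertex on the path from a to b: the vertex whose subtree contains both
leaves while no child subtree contains both; its label is the weight.\<close>
definition mu :: "'a ptree \<Rightarrow> 'a wgraph" where
  "mu T = {(a, b, k). precedes T a b \<and>
     (\<exists>ts. Node k ts \<in> subtrees T \<and> a \<in> set (leaves (Node k ts)) \<and> b \<in> set (leaves (Node k ts))
        \<and> (\<forall>t\<in>set ts. \<not> (a \<in> set (leaves t) \<and> b \<in> set (leaves t))))}"

text \<open>Directed path a_0 -> ... -> a_k in g with k >= 1 (given as the vertex list)\<close>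
definition dpath :: "'a wgraph \<Rightarrow> 'a list \<Rightarrow> bool" where
  "dpath g as = (2 \<le> length as \<and> (\<forall>p. p + 1 < length as \<longrightarrow> (as ! p, as ! (p + 1)) \<in> dir g))"

definition path_condition :: "'a wgraph \<Rightarrow> bool" where
  "path_condition g = (\<forall>as. dpath g as \<longrightarrow>
     (\<exists>i. i + 1 < length as \<and> (\<exists>w. \<forall>p q. p \<le> i \<and> i < q \<and> q < length as \<longrightarrow> (as ! p, as ! q, w) \<in> g)))"

end

theory Submission
  imports Defs
begin

text \<open>
  For T = Node k [T_1, ..., T_m] the edges of mu T are those of the mu T_j together with
  the edges of weight k from leaves of T_x to leaves of T_y for x < y. Along a directed path
  in mu T the index of the child containing the current vertex therefore never decreases:
  if it increases somewhere, cutting the path there separates vertices in earlier children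
  from vertices in later ones, so all crossing edges have weight k; otherwise the path lies
  in a single mu T_j and induction applies.

  Conversely, the directions of a graph g in Gn n A order A linearly, and the path through
  all of A in this order splits into an initial segment P and a final segment S with all
  edges from P to S of one weight w. The induced subgraphs on P and S inherit the path
  condition, so by induction on |A| they are mu T_P and mu T_S, and then
  g = mu (Node w [T_P, T_S]).
\<close>

definition list_precedes :: "'a list \<Rightarrow> 'a \<Rightarrow> 'a \<Rightarrow> bool" where
  "list_precedes L a b \<longleftrightarrow> (\<exists>i j. i < j \<and> j < length L \<and> L ! i = a \<and> L ! j = b)"

lemma list_precedes_iff_append:
  "list_precedes L a b \<longleftrightarrow> (\<exists>us vs. L = us @ vs \<and> a \<in> set us \<and> b \<in> set vs)"
proof
  assume "list_precedes L a b"
  then obtain i j where "i < j" "j < length L" "L ! i = a" "L ! j = b"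
    unfolding list_precedes_def by blast
  then have "take j L ! i = a" "drop j L ! 0 = b" "i < length (take j L)" "0 < length (drop j L)"
    by auto
  then have "a \<in> set (take j L)" "b \<in> set (drop j L)"
    by (metis nth_mem)+
  then show "\<exists>us vs. L = us @ vs \<and> a \<in> set us \<and> b \<in> set vs"
    by (metis append_take_drop_id)
next
  assume "\<exists>us vs. L = us @ vs \<and> a \<in> set us \<and> b \<in> set vs"
  then obtain us vs i j where "L = us @ vs" "i < length us" "us ! i = a" "j < length vs" "vs ! j = b"
    by (auto simp: in_set_conv_nth)
  then have "i < length us + j" "length us + j < length L" "L ! i = a" "L ! (length us + j) = b"
    by (auto simp: nth_append)
  then show "list_precedes L a b"
    unfolding list_precedes_def by blast
qed

lemma list_precedes_Nil [simp]: "\<not> list_precedes [] a b"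
  by (simp add: list_precedes_def)

lemma list_precedes_append:
  "list_precedes (xs @ ys) a b \<longleftrightarrow>
     list_precedes xs a b \<or> list_precedes ys a b \<or> (a \<in> set xs \<and> b \<in> set ys)"
proof
  assume "list_precedes (xs @ ys) a b"
  then obtain us vs where "xs @ ys = us @ vs" "a \<in> set us" "b \<in> set vs"
    unfolding list_precedes_iff_append by blast
  then show "list_precedes xs a b \<or> list_precedes ys a b \<or> (a \<in> set xs \<and> b \<in> set ys)"
    unfolding append_eq_append_conv2
  proof (elim exE disjE conjE)
    fix m assume m: "xs = us @ m" "m @ ys = vs"
    have "b \<in> set m \<Longrightarrow> list_precedes xs a b"
      using m(1) \<open>a \<in> set us\<close> list_precedes_iff_append[of xs a b] by blast
    then show ?thesis using m \<open>a \<in> set us\<close> \<open>b \<in> set vs\<close> by auto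
  next
    fix m assume m: "xs @ m = us" "ys = m @ vs"
    have "a \<in> set m \<Longrightarrow> list_precedes ys a b"
      using m(2) \<open>b \<in> set vs\<close> list_precedes_iff_append[of ys a b] by blast
    then show ?thesis using m \<open>a \<in> set us\<close> \<open>b \<in> set vs\<close> by auto
  qed
next
  have "list_precedes (xs @ ys) a b" if "list_precedes xs a b"
  proof -
    from that obtain us vs where "xs = us @ vs" "a \<in> set us" "b \<in> set vs"
      unfolding list_precedes_iff_append by blast
    then show ?thesis
      using list_precedes_iff_append[of "xs @ ys" a b] by (metis append.assoc set_append UnI1)
  qed
  moreover have "list_precedes (xs @ ys) a b" if "list_precedes ys a b"
  proof -
    from that obtain us vs where "ys = us @ vs" "a \<in> set us" "b \<in> set vs"
      unfolding list_precedes_iff_append by blast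
    then show ?thesis
      using list_precedes_iff_append[of "xs @ ys" a b] by (metis append.assoc set_append UnI2)
  qed
  moreover have "list_precedes (xs @ ys) a b" if "a \<in> set xs" "b \<in> set ys"
    using that list_precedes_iff_append[of "xs @ ys" a b] by blast
  ultimately show "list_precedes xs a b \<or> list_precedes ys a b \<or> (a \<in> set xs \<and> b \<in> set ys)
    \<Longrightarrow> list_precedes (xs @ ys) a b" by blast
qed

lemma list_precedes_concat:
  "list_precedes (concat xss) a b \<longleftrightarrow>
     (\<exists>j<length xss. list_precedes (xss ! j) a b) \<or>
     (\<exists>y<length xss. \<exists>x<y. a \<in> set (xss ! x) \<and> b \<in> set (xss ! y))"
  by (induction xss) (simp_all add: list_precedes_append Ex_less_Suc2 ex_disj_distrib, metis in_set_conv_nth)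

lemma distinct_concat_nth_unique:
  "distinct (concat xss) \<Longrightarrow> x < length xss \<Longrightarrow> y < length xss
   \<Longrightarrow> a \<in> set (xss ! x) \<Longrightarrow> a \<in> set (xss ! y) \<Longrightarrow> x = y"
  by (induction xss arbitrary: x y) (fastforce simp: nth_Cons split: nat.splits)+

lemma in_set_concat_nth: "a \<in> set (concat xss) \<longleftrightarrow> (\<exists>j<length xss. a \<in> set (xss ! j))"
  by (metis in_set_conv_nth set_concat UN_iff)

lemma exists_sorted_wrt_total_acyclic:
  assumes "finite B" "acyclic r"
    and "\<And>a b. a \<in> B \<Longrightarrow> b \<in> B \<Longrightarrow> a \<noteq> b \<Longrightarrow> (a, b) \<in> r \<or> (b, a) \<in> r"
  shows "\<exists>xs. distinct xs \<and> set xs = B \<and> sorted_wrt (\<lambda>x y. (x, y) \<in> r) xs"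
  using assms(1,3)
proof (induction B rule: finite_remove_induct)
  case empty
  then show ?case by simp
next
  case (remove B)
  have "finite (r \<inter> B \<times> B)" "acyclic (r \<inter> B \<times> B)"
    using remove.hyps(1) acyclic_subset[OF assms(2)] by auto
  then have "wf (r \<inter> B \<times> B)"
    by (rule finite_acyclic_wf)
  then obtain m where m: "m \<in> B" and min: "\<And>y. (y, m) \<in> r \<inter> B \<times> B \<Longrightarrow> y \<notin> B"
    using remove.hyps(2) wfE_min by (metis equals0I)
  obtain xs where xs: "distinct xs" "set xs = B - {m}" "sorted_wrt (\<lambda>x y. (x, y) \<in> r) xs"
    using remove.IH[OF m] remove.prems by blast
  have "(m, y) \<in> r" if "y \<in> set xs" for y
    using that xs(2) m min remove.prems[of m y] by blast
  then have "distinct (m # xs) \<and> set (m # xs) = B \<and> sorted_wrt (\<lambda>x y. (x, y) \<in> r) (m # xs)"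
    using xs m by auto
  then show ?case ..
qed

lemma leaves_subtree: "N \<in> subtrees t \<Longrightarrow> set (leaves N) \<subseteq> set (leaves t)"
  by (induction t rule: subtrees.induct) auto

lemma in_leaves_Node: "a \<in> set (leaves (Node k ts)) \<longleftrightarrow> (\<exists>j<length ts. a \<in> set (leaves (ts ! j)))"
  using in_set_concat_nth[of a "map leaves ts"] by (simp cong: conj_cong)

lemma precedes_eq_list_precedes: "precedes T = list_precedes (leaves T)"
  by (simp add: fun_eq_iff precedes_def list_precedes_def)

lemma precedes_Node:
  "precedes (Node k ts) a b \<longleftrightarrow>
     (\<exists>j<length ts. precedes (ts ! j) a b) \<or>
     (\<exists>y<length ts. \<exists>x<y. a \<in> set (leaves (ts ! x)) \<and> b \<in> set (leaves (ts ! y)))"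
  using list_precedes_concat[of "map leaves ts" a b]
  by (simp add: precedes_eq_list_precedes cong: conj_cong)

lemma precedes_leaves: "precedes T a b \<Longrightarrow> a \<in> set (leaves T) \<and> b \<in> set (leaves T)"
  unfolding precedes_def by auto

lemma distinct_leaves_Node_child_unique:
  "distinct (leaves (Node k ts)) \<Longrightarrow> x < length ts \<Longrightarrow> y < length ts
   \<Longrightarrow> a \<in> set (leaves (ts ! x)) \<Longrightarrow> a \<in> set (leaves (ts ! y)) \<Longrightarrow> x = y"
  using distinct_concat_nth_unique[of "map leaves ts" x y a] by simp

lemma distinct_leaves_child: "distinct (leaves (Node k ts)) \<Longrightarrow> t \<in> set ts \<Longrightarrow> distinct (leaves t)"
  by (simp add: distinct_concat_iff)

lemma mu_Leaf [simp]: "mu (Leaf x) = {}"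
  by (simp add: mu_def precedes_def)

lemma mu_leaves: "(a, b, v) \<in> mu T \<Longrightarrow> a \<in> set (leaves T) \<and> b \<in> set (leaves T)"
  unfolding mu_def by (auto dest: precedes_leaves)

lemma mu_child:
  assumes "t \<in> set ts"
  shows "mu t \<subseteq> mu (Node k ts)"
proof -
  have "precedes (Node k ts) a b" if "precedes t a b" for a b
    using assms that precedes_Node by (metis in_set_conv_nth)
  moreover have "subtrees t \<subseteq> subtrees (Node k ts)"
    using assms by auto
  ultimately show ?thesis
    unfolding mu_def by blast
qed

lemma mu_cross:
  assumes d: "distinct (leaves (Node k ts))" and xy: "x < y" "y < length ts"
    and a: "a \<in> set (leaves (ts ! x))" and b: "b \<in> set (leaves (ts ! y))"
  shows "(a, b, k) \<in> mu (Node k ts)"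
proof -
  have x: "x < length ts"
    using xy by simp
  have "precedes (Node k ts) a b"
    using xy a b precedes_Node[of k ts a b] by blast
  moreover have "a \<in> set (leaves (Node k ts))" "b \<in> set (leaves (Node k ts))"
    using x xy(2) a b in_leaves_Node[of _ k ts] by blast+
  moreover have "\<not> (a \<in> set (leaves t) \<and> b \<in> set (leaves t))" if "t \<in> set ts" for t
  proof
    assume ab: "a \<in> set (leaves t) \<and> b \<in> set (leaves t)"
    obtain z where z: "z < length ts" "t = ts ! z"
      using \<open>t \<in> set ts\<close> by (metis in_set_conv_nth)
    have "z = x" "z = y"
      using distinct_leaves_Node_child_unique[OF d z(1)] x xy(2) a b ab z(2) by blast+
    then show False
      using xy by simp
  qed
  moreover have "Node k ts \<in> subtrees (Node k ts)"
    by simp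
  ultimately show ?thesis
    unfolding mu_def by auto
qed

lemma precedes_Node_within_child:
  assumes d: "distinct (leaves (Node k ts))" and j: "j < length ts"
    and ab: "a \<in> set (leaves (ts ! j))" "b \<in> set (leaves (ts ! j))"
  shows "precedes (Node k ts) a b \<longleftrightarrow> precedes (ts ! j) a b"
  unfolding precedes_Node
proof (intro iffI; (elim disjE exE conjE)?)
  fix i assume i: "i < length ts" "precedes (ts ! i) a b"
  then have "i = j"
    using distinct_leaves_Node_child_unique[OF d i(1) j] precedes_leaves[OF i(2)] ab by blast
  then show "precedes (ts ! j) a b"
    using i by simp
next
  fix x y assume xy: "y < length ts" "x < y" "a \<in> set (leaves (ts ! x))" "b \<in> set (leaves (ts ! y))"
  have "x = j" "y = j"
    using distinct_leaves_Node_child_unique[OF d _ j] xy ab by auto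
  then show "precedes (ts ! j) a b"
    using xy by simp
qed (use j in blast)

lemma mu_Node_cases:
  assumes d: "distinct (leaves (Node k ts))" and e: "(a, b, v) \<in> mu (Node k ts)"
  shows "(\<exists>t\<in>set ts. (a, b, v) \<in> mu t) \<or>
    (v = k \<and> (\<exists>y<length ts. \<exists>x<y. a \<in> set (leaves (ts ! x)) \<and> b \<in> set (leaves (ts ! y))))"
proof -
  obtain ts' where pr: "precedes (Node k ts) a b" and N: "Node v ts' \<in> subtrees (Node k ts)"
    and ab: "a \<in> set (leaves (Node v ts'))" "b \<in> set (leaves (Node v ts'))"
    and sep: "\<forall>t\<in>set ts'. \<not> (a \<in> set (leaves t) \<and> b \<in> set (leaves t))"
    using e unfolding mu_def by blast
  show ?thesis
  proof (cases "Node v ts' = Node k ts")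
    case True
    then have "v = k" "ts' = ts" by simp_all
    have "\<not> precedes (ts ! j) a b" if "j < length ts" for j
      using sep precedes_leaves[of "ts ! j" a b] nth_mem[OF that] unfolding \<open>ts' = ts\<close> by blast
    then show ?thesis
      using pr precedes_Node[of k ts a b] \<open>v = k\<close> by blast
  next
    case False
    then obtain j where j: "j < length ts" "Node v ts' \<in> subtrees (ts ! j)"
      using N by (auto simp: in_set_conv_nth)
    have abj: "a \<in> set (leaves (ts ! j))" "b \<in> set (leaves (ts ! j))"
      using leaves_subtree[OF j(2)] ab by auto
    have "precedes (ts ! j) a b"
      using pr precedes_Node_within_child[OF d j(1) abj] by blast
    then have "(a, b, v) \<in> mu (ts ! j)"
      unfolding mu_def using j(2) ab sep by blast
    then show ?thesis
      using j(1) by auto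
  qed
qed

lemma mu_Node:
  assumes d: "distinct (leaves (Node k ts))"
  shows "mu (Node k ts) = (\<Union>t\<in>set ts. mu t) \<union>
    {(a, b, k) | a b. \<exists>y<length ts. \<exists>x<y. a \<in> set (leaves (ts ! x)) \<and> b \<in> set (leaves (ts ! y))}"
    (is "_ = ?children \<union> ?cross")
proof
  show "mu (Node k ts) \<subseteq> ?children \<union> ?cross"
  proof
    fix e assume "e \<in> mu (Node k ts)"
    then obtain a b v where "e = (a, b, v)" "(a, b, v) \<in> mu (Node k ts)"
      by (cases e) auto
    with mu_Node_cases[OF d] show "e \<in> ?children \<union> ?cross"
      by auto
  qed
  have "?children \<subseteq> mu (Node k ts)"
    using mu_child by blast
  moreover have "?cross \<subseteq> mu (Node k ts)"
    using mu_cross[OF d] by auto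
  ultimately show "?children \<union> ?cross \<subseteq> mu (Node k ts)"
    by (rule Un_least)
qed

lemma mu_Node_pair:
  assumes "distinct (leaves T1 @ leaves T2)"
  shows "mu (Node k [T1, T2]) =
    mu T1 \<union> mu T2 \<union> {(a, b, k) | a b. a \<in> set (leaves T1) \<and> b \<in> set (leaves T2)}"
  using assms mu_Node[of k "[T1, T2]"] by (simp add: Ex_less_Suc2 Un_ac)

lemma dpath_nth_in_Field:
  assumes dp: "dpath g as" and p: "p < length as"
  shows "as ! p \<in> Field (dir g)"
proof (cases "p + 1 < length as")
  case True
  then show ?thesis
    using dp unfolding dpath_def by (blast intro: FieldI1)
next
  case False
  then have "p = (p - 1) + 1" "(p - 1) + 1 < length as"
    using p dp unfolding dpath_def by auto
  then show ?thesis
    using dp unfolding dpath_def by (metis FieldI2)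
qed

lemma Field_dir_mu: "Field (dir (mu T)) \<subseteq> set (leaves T)"
  using mu_leaves by (fastforce simp: Field_def dir_def)

definition child_index :: "'a ptree list \<Rightarrow> 'a \<Rightarrow> nat" where
  "child_index ts a = (THE j. j < length ts \<and> a \<in> set (leaves (ts ! j)))"

lemma child_index_eq:
  assumes d: "distinct (leaves (Node k ts))" and j: "j < length ts" "a \<in> set (leaves (ts ! j))"
  shows "child_index ts a = j"
  unfolding child_index_def
proof (rule the_equality)
  show "j < length ts \<and> a \<in> set (leaves (ts ! j))"
    using j ..
next
  fix i assume "i < length ts \<and> a \<in> set (leaves (ts ! i))"
  then show "i = j"
    using distinct_leaves_Node_child_unique[OF d _ j(1) _ j(2)] by blast
qed

lemma child_index:
  assumes d: "distinct (leaves (Node k ts))" and a: "a \<in> set (leaves (Node k ts))"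
  shows "child_index ts a < length ts" "a \<in> set (leaves (ts ! child_index ts a))"
proof -
  obtain j where "j < length ts" "a \<in> set (leaves (ts ! j))"
    using a unfolding in_leaves_Node by blast
  then show "child_index ts a < length ts" "a \<in> set (leaves (ts ! child_index ts a))"
    using child_index_eq[OF d] by simp_all
qed

lemma mu_Node_edge_child_index:
  assumes d: "distinct (leaves (Node k ts))" and e: "(a, b, v) \<in> mu (Node k ts)"
  shows "child_index ts a < child_index ts b \<or>
    (child_index ts a = child_index ts b \<and> (a, b, v) \<in> mu (ts ! child_index ts a))"
  using mu_Node_cases[OF d e]
proof (elim disjE bexE conjE exE)
  fix t assume t: "t \<in> set ts" "(a, b, v) \<in> mu t"
  then obtain j where j: "j < length ts" "t = ts ! j"
    by (metis in_set_conv_nth)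
  then have "child_index ts a = j" "child_index ts b = j"
    using child_index_eq[OF d j(1)] mu_leaves[OF t(2)] by simp_all
  then show ?thesis
    using t(2) j(2) by simp
next
  fix x y assume "y < length ts" "x < y" "a \<in> set (leaves (ts ! x))" "b \<in> set (leaves (ts ! y))"
  then have "child_index ts a = x" "child_index ts b = y"
    using child_index_eq[OF d] by simp_all
  then show ?thesis
    using \<open>x < y\<close> by simp
qed

lemma dpath_mu_Node:
  assumes d: "distinct (leaves (Node k ts))" and dp: "dpath (mu (Node k ts)) as"
  shows "(\<exists>t\<in>set ts. dpath (mu t) as) \<or>
    (\<exists>i. i + 1 < length as \<and>
      (\<forall>p q. p \<le> i \<and> i < q \<and> q < length as \<longrightarrow> (as ! p, as ! q, k) \<in> mu (Node k ts)))"
proof -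
  define c where "c p = child_index ts (as ! p)" for p
  have leaf: "as ! p \<in> set (leaves (Node k ts))" if "p < length as" for p
    using Field_dir_mu dpath_nth_in_Field[OF dp that] by (rule subsetD)
  have step: "c p < c (p + 1) \<or> (c p = c (p + 1) \<and> (as ! p, as ! (p + 1)) \<in> dir (mu (ts ! c p)))"
    if p: "p + 1 < length as" for p
  proof -
    obtain v where "(as ! p, as ! (p + 1), v) \<in> mu (Node k ts)"
      using dp p unfolding dpath_def dir_def by blast
    from mu_Node_edge_child_index[OF d this] show ?thesis
      unfolding c_def dir_def by auto
  qed
  show ?thesis
  proof (cases "\<exists>i. i + 1 < length as \<and> c i \<noteq> c (i + 1)")
    case True
    then obtain i where i: "i + 1 < length as" "c i < c (i + 1)"
      using step by blast
    have mono: "c p \<le> c q" if "p \<le> q" "q < length as" for p q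
      using lift_Suc_mono_le_ivl[of "{n. n + 1 < length as}" c p q] step that by fastforce
    have "(as ! p, as ! q, k) \<in> mu (Node k ts)" if "p \<le> i" "i < q" "q < length as" for p q
    proof (rule mu_cross[OF d])
      show "c p < c q"
        using mono[of p i] mono[of "i + 1" q] i that by simp
    qed (use child_index[OF d leaf] that in \<open>auto simp: c_def\<close>)
    then show ?thesis
      using i(1) by blast
  next
    case False
    then have "c p = c 0" if "p < length as" for p
      using that by (induction p) auto
    then have "(as ! p, as ! (p + 1)) \<in> dir (mu (ts ! c 0))" if "p + 1 < length as" for p
      using step[OF that] False that by auto
    then have "dpath (mu (ts ! c 0)) as"
      using dp unfolding dpath_def by blast
    moreover have "ts ! c 0 \<in> set ts"
      using child_index(1)[OF d leaf, of 0] dp unfolding dpath_def c_def by fastforce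
    ultimately show ?thesis
      by blast
  qed
qed

lemma path_condition_mu: "distinct (leaves T) \<Longrightarrow> path_condition (mu T)"
proof (induction T)
  case (Leaf x)
  have "\<not> dpath {} as" for as :: "'a list"
  proof
    assume "dpath {} as"
    then have "(as ! 0, as ! (0 + 1)) \<in> dir {}"
      unfolding dpath_def by simp
    then show False
      by (simp add: dir_def)
  qed
  then show ?case
    by (simp add: path_condition_def)
next
  case (Node k ts)
  show ?case
    unfolding path_condition_def
  proof (intro allI impI)
    fix as assume "dpath (mu (Node k ts)) as"
    from dpath_mu_Node[OF Node.prems this]
    show "\<exists>i. i + 1 < length as \<and>
      (\<exists>w. \<forall>p q. p \<le> i \<and> i < q \<and> q < length as \<longrightarrow> (as ! p, as ! q, w) \<in> mu (Node k ts))"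
    proof (elim disjE bexE)
      fix t assume t: "t \<in> set ts" "dpath (mu t) as"
      have "path_condition (mu t)"
        using Node.IH[OF t(1)] distinct_leaves_child[OF Node.prems t(1)] .
      then obtain i w where "i + 1 < length as"
        "\<forall>p q. p \<le> i \<and> i < q \<and> q < length as \<longrightarrow> (as ! p, as ! q, w) \<in> mu t"
        using t(2) unfolding path_condition_def by blast
      then show ?thesis
        using mu_child[OF t(1), of k] by blast
    qed blast
  qed
qed

lemma Gn_edgeD:
  assumes "g \<in> Gn n A" "(a, b, w) \<in> g"
  shows "a \<in> A" "b \<in> A" "a \<noteq> b" "w \<in> {1..n}"
  using bspec[OF conjunct1[OF CollectD[OF assms(1)[unfolded Gn_def]]] assms(2)] by simp_all

lemma Gn_ex1:
  assumes "g \<in> Gn n A" "a \<in> A" "b \<in> A" "a \<noteq> b"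
  shows "\<exists>!e. e \<in> g \<and> (fst e, fst (snd e)) \<in> {(a, b), (b, a)}"
proof -
  have "\<forall>a\<in>A. \<forall>b\<in>A. a \<noteq> b \<longrightarrow> (\<exists>!e. e \<in> g \<and> (fst e, fst (snd e)) \<in> {(a, b), (b, a)})"
    using CollectD[OF assms(1)[unfolded Gn_def]] by (rule conjunct1[OF conjunct2])
  from bspec[OF bspec[OF this assms(2)] assms(3)] assms(4) show ?thesis
    by (rule mp)
qed

lemma Gn_acyclic: "g \<in> Gn n A \<Longrightarrow> acyclic (dir g)"
  unfolding Gn_def by simp

lemma Gn_unique:
  assumes g: "g \<in> Gn n A" and e: "(a, b, v) \<in> g" "(a', b', v') \<in> g"
    and ab: "(a', b') \<in> {(a, b), (b, a)}"
  shows "(a', b', v') = (a, b, v)"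
proof -
  have "a \<in> A" "b \<in> A" "a \<noteq> b"
    using Gn_edgeD[OF g e(1)] by simp_all
  from Gn_ex1[OF g this] obtain e0
    where "\<And>e. e \<in> g \<and> (fst e, fst (snd e)) \<in> {(a, b), (b, a)} \<Longrightarrow> e = e0"
    by (elim ex1E) blast
  then show ?thesis
    using e ab by (metis fst_conv snd_conv insertI1)
qed

lemma Gn_total:
  assumes "g \<in> Gn n A" "a \<in> A" "b \<in> A" "a \<noteq> b"
  shows "(a, b) \<in> dir g \<or> (b, a) \<in> dir g"
proof -
  obtain e where "e \<in> g" "(fst e, fst (snd e)) \<in> {(a, b), (b, a)}"
    using Gn_ex1[OF assms] by (elim ex1E) blast
  then show ?thesis
    unfolding dir_def by (cases e) auto
qed

definition induced_subgraph :: "'a wgraph \<Rightarrow> 'a set \<Rightarrow> 'a wgraph" where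
  "induced_subgraph g B = {(a, b, w) \<in> g. a \<in> B \<and> b \<in> B}"

lemma dir_induced_subgraph: "dir (induced_subgraph g B) \<subseteq> dir g \<inter> B \<times> B"
  unfolding dir_def induced_subgraph_def by auto

lemma induced_subgraph_Gn:
  assumes g: "g \<in> Gn n A" and B: "B \<subseteq> A"
  shows "induced_subgraph g B \<in> Gn n B"
  unfolding Gn_def mem_Collect_eq
proof (intro conjI)
  show "\<forall>(a, b, w)\<in>induced_subgraph g B. a \<in> B \<and> b \<in> B \<and> a \<noteq> b \<and> w \<in> {1..n}"
    using Gn_edgeD[OF g] unfolding induced_subgraph_def by fast
next
  show "\<forall>a\<in>B. \<forall>b\<in>B. a \<noteq> b \<longrightarrow>
    (\<exists>!e. e \<in> induced_subgraph g B \<and> (fst e, fst (snd e)) \<in> {(a, b), (b, a)})"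
  proof (intro ballI impI)
    fix a b assume ab: "a \<in> B" "b \<in> B" "a \<noteq> b"
    then obtain e where e: "e \<in> g" "(fst e, fst (snd e)) \<in> {(a, b), (b, a)}"
      and unique: "\<And>e'. e' \<in> g \<and> (fst e', fst (snd e')) \<in> {(a, b), (b, a)} \<Longrightarrow> e' = e"
      using Gn_ex1[OF g] B by (metis (no_types, lifting) ex1E subsetD)
    have "e \<in> induced_subgraph g B"
      using e ab unfolding induced_subgraph_def by auto
    then show "\<exists>!e. e \<in> induced_subgraph g B \<and> (fst e, fst (snd e)) \<in> {(a, b), (b, a)}"
      using e(2) unique unfolding induced_subgraph_def by blast
  qed
next
  show "acyclic (dir (induced_subgraph g B))"
    using acyclic_subset[OF Gn_acyclic[OF g]] dir_induced_subgraph by blast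
qed

lemma path_condition_induced_subgraph:
  assumes pc: "path_condition g"
  shows "path_condition (induced_subgraph g B)"
  unfolding path_condition_def
proof (intro allI impI)
  fix as assume dp: "dpath (induced_subgraph g B) as"
  then have "dpath g as"
    using dir_induced_subgraph unfolding dpath_def by blast
  then obtain i w where iw: "i + 1 < length as"
    "\<forall>p q. p \<le> i \<and> i < q \<and> q < length as \<longrightarrow> (as ! p, as ! q, w) \<in> g"
    using pc unfolding path_condition_def by blast
  have "Field (dir (induced_subgraph g B)) \<subseteq> B"
    using dir_induced_subgraph by (fastforce simp: Field_def)
  then have "as ! p \<in> B" if "p < length as" for p
    using dpath_nth_in_Field[OF dp that] by blast
  then show "\<exists>i. i + 1 < length as \<and> (\<exists>w. \<forall>p q. p \<le> i \<and> i < q \<and> q < length as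
      \<longrightarrow> (as ! p, as ! q, w) \<in> induced_subgraph g B)"
    using iw unfolding induced_subgraph_def by auto
qed

lemma Gn_path_condition_split:
  assumes g: "g \<in> Gn n A" and A: "finite A" "2 \<le> card A" and pc: "path_condition g"
  obtains P S w where "A = P \<union> S" "P \<inter> S = {}" "P \<noteq> {}" "S \<noteq> {}"
    "\<And>a b. a \<in> P \<Longrightarrow> b \<in> S \<Longrightarrow> (a, b, w) \<in> g"
proof -
  obtain xs where xs: "distinct xs" "set xs = A" "sorted_wrt (\<lambda>x y. (x, y) \<in> dir g) xs"
    using exists_sorted_wrt_total_acyclic[OF A(1) Gn_acyclic[OF g] Gn_total[OF g]] by blast
  have "length xs = card A"
    using distinct_card[OF xs(1)] xs(2) by simp
  then have "dpath g xs"
    using A(2) xs(3) unfolding dpath_def sorted_wrt_iff_nth_less by simp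
  then obtain i w where i: "i + 1 < length xs"
    and iw: "\<And>p q. p \<le> i \<Longrightarrow> i < q \<Longrightarrow> q < length xs \<Longrightarrow> (xs ! p, xs ! q, w) \<in> g"
    using pc unfolding path_condition_def by blast
  let ?P = "set (take (i + 1) xs)" and ?S = "set (drop (i + 1) xs)"
  have "A = ?P \<union> ?S"
    using xs(2) by (metis append_take_drop_id set_append)
  moreover have "?P \<inter> ?S = {}"
    using set_take_disj_set_drop_if_distinct[OF xs(1)] by blast
  moreover have "?P \<noteq> {}" "?S \<noteq> {}"
    using i by auto
  moreover have "(a, b, w) \<in> g" if "a \<in> ?P" "b \<in> ?S" for a b
  proof -
    obtain p where "p \<le> i" "xs ! p = a"
      using \<open>a \<in> ?P\<close> by (auto simp: in_set_conv_nth less_Suc_eq_le)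
    moreover obtain j where "j < length (drop (i + 1) xs)" "drop (i + 1) xs ! j = b"
      using \<open>b \<in> ?S\<close> by (auto simp: in_set_conv_nth)
    then have "i < i + 1 + j" "i + 1 + j < length xs" "xs ! (i + 1 + j) = b"
      by auto
    ultimately show ?thesis
      using iw by blast
  qed
  ultimately show ?thesis
    by (rule that)
qed

lemma Gn_eq_induced_subgraphs_Un_cross:
  assumes g: "g \<in> Gn n (P \<union> S)" and disj: "P \<inter> S = {}"
    and cross: "\<And>a b. a \<in> P \<Longrightarrow> b \<in> S \<Longrightarrow> (a, b, w) \<in> g"
  shows "g = induced_subgraph g P \<union> induced_subgraph g S \<union> {(a, b, w) | a b. a \<in> P \<and> b \<in> S}"
proof (intro equalityI subsetI)
  fix e assume "e \<in> g"
  then obtain a b v where e: "e = (a, b, v)" "(a, b, v) \<in> g"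
    by (cases e) auto
  have "a \<in> P \<union> S" "b \<in> P \<union> S" "a \<noteq> b"
    using Gn_edgeD[OF g e(2)] by simp_all
  moreover have "v = w" if "a \<in> P" "b \<in> S"
    using Gn_unique[OF g cross[OF that] e(2)] by simp
  moreover have False if "a \<in> S" "b \<in> P"
    using Gn_unique[OF g cross[OF that(2,1)] e(2)] \<open>a \<noteq> b\<close> by simp
  ultimately show "e \<in> induced_subgraph g P \<union> induced_subgraph g S \<union> {(a, b, w) | a b. a \<in> P \<and> b \<in> S}"
    using e unfolding induced_subgraph_def by blast
qed (auto simp: induced_subgraph_def cross)

lemma Node_pair_trees:
  assumes "T1 \<in> trees n P" "T2 \<in> trees n S" "P \<inter> S = {}" "k \<in> {1..n}"
  shows "Node k [T1, T2] \<in> trees n (P \<union> S)"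
    and "mu (Node k [T1, T2]) = mu T1 \<union> mu T2 \<union> {(a, b, k) | a b. a \<in> P \<and> b \<in> S}"
  using assms mu_Node_pair[of T1 T2 k] unfolding trees_def by auto

lemma path_condition_imp_in_mu_image:
  assumes "finite A" "A \<noteq> {}" "g \<in> Gn n A" "path_condition g"
  shows "g \<in> mu ` trees n A"
  using assms
proof (induction "card A" arbitrary: A g rule: less_induct)
  case less
  note A = less.prems(1,2) and g = less.prems(3) and pc = less.prems(4)
  show ?case
  proof (cases "card A = 1")
    case True
    then obtain a where a: "A = {a}"
      by (rule card_1_singletonE)
    then have "g = {}"
      using Gn_edgeD(1-3)[OF g] by fast
    moreover have "Leaf a \<in> trees n A"
      using a unfolding trees_def by simp
    ultimately show ?thesis
      by (metis image_eqI mu_Leaf)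
  next
    case False
    then have "2 \<le> card A"
      using A card_0_eq by fastforce
    then obtain P S w where PS: "A = P \<union> S" "P \<inter> S = {}" "P \<noteq> {}" "S \<noteq> {}"
      and cross: "\<And>a b. a \<in> P \<Longrightarrow> b \<in> S \<Longrightarrow> (a, b, w) \<in> g"
      using Gn_path_condition_split[OF g A(1) _ pc] by blast
    have IH: "induced_subgraph g B \<in> mu ` trees n B"
      if "B \<subseteq> A" "B \<noteq> {}" "card B < card A" for B
      using less.hyps[OF that(3) finite_subset[OF that(1) A(1)] that(2)
          induced_subgraph_Gn[OF g that(1)] path_condition_induced_subgraph[OF pc]] .
    have "card P < card A" "card S < card A"
      using A(1) PS by (auto intro!: psubset_card_mono)
    then obtain TP TS where TP: "TP \<in> trees n P" "mu TP = induced_subgraph g P"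
      and TS: "TS \<in> trees n S" "mu TS = induced_subgraph g S"
      using IH[of P] IH[of S] PS by (metis imageE sup_ge1 sup_ge2)
    have w: "w \<in> {1..n}"
      using PS(3,4) Gn_edgeD(4)[OF g cross] by blast
    have "mu (Node w [TP, TS]) = g"
      using Node_pair_trees(2)[OF TP(1) TS(1) PS(2) w] TP(2) TS(2)
        Gn_eq_induced_subgraphs_Un_cross[OF g[unfolded PS(1)] PS(2) cross] by simp
    then show ?thesis
      using Node_pair_trees(1)[OF TP(1) TS(1) PS(2) w] PS(1) by blast
  qed
qed

theorem mainTheorem17:
  fixes n :: nat and A :: "'a set" and g :: "'a wgraph"
  assumes "n \<ge> 1" and "finite A" and "A \<noteq> {}" and "g \<in> Gn n A"
  shows "g \<in> mu ` trees n A \<longleftrightarrow> path_condition g"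
proof
  assume "g \<in> mu ` trees n A"
  then show "path_condition g"
    using path_condition_mu unfolding trees_def by blast
next
  assume "path_condition g"
  then show "g \<in> mu ` trees n A"
    using path_condition_imp_in_mu_image assms(2-4) by blast
qed

end
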